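(* Let $P\in(0,1)$ and $h(x)=P^{1/(1+x)}$ for $x\ge0$. Then $h$ is increasing on $[0,\infty)$ and $$h''(x)\ge-\frac{(\sqrt3-3)^4\,e^{\sqrt3-3}}{\sqrt3\,(\ln P)^2}\qquad\text{for all }x\ge0.$$ Consequently, for $K\ge1$, $\mu_1,\dots,\mu_K>0$ and $P_1,\dots,P_K\in(0,1)$, the function $f(\boldsymbol x)=\sum_{k=1}^K\mu_kP_k^{1/(1+x_k)}$ on $\mathbb{R}_+^K$ satisfies, for every $\boldsymbol x_0\in\mathbb{R}_+^K$, $f(\boldsymbol x)\ge\zeta(\boldsymbol x|\boldsymbol x_0)$ for all $\boldsymbol x\in\mathbb{R}_+^K$ with equality at $\boldsymbol x=\boldsymbol x_0$, where $$\zeta(\boldsymbol x|\boldsymbol x_0)=\sum_{k=1}^K\mu_k\Big(P_k^{1/(1+x_{0,k})}-\frac{P_k^{1/(1+x_{0,k})}\ln P_k}{(1+x_{0,k})^2}(x_k-x_{0,k})-\frac{(\sqrt3-3)^4e^{\sqrt3-3}}{2\sqrt3(\ln P_k)^2}(x_k-x_{0,k})^2\Big),$$ which is a concave function of $\boldsymbol x$.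
   Context: $\mathbb{R}_+=[0,\infty)$; $P_k$ plays the role of the false-alarm probability on subcarrier $k$ and $P_k^{1/(1+x_k)}$ is the detection probability at SINR $x_k$. *)

theory Defs
  imports "HOL-Analysis.Analysis"
begin

definition hdet :: "real \<Rightarrow> real \<Rightarrow> real" where
  "hdet P x = P powr (1 / (1 + x))"

definition cbound :: real where
  "cbound = (sqrt 3 - 3) ^ 4 * exp (sqrt 3 - 3) / sqrt 3"

definition nonneg_orthant :: "(real ^ 'k) set" where
  "nonneg_orthant = {x. \<forall>k. 0 \<le> x $ k}"

definition fobj :: "real ^ 'k \<Rightarrow> real ^ 'k \<Rightarrow> real ^ 'k::finite \<Rightarrow> real" where
  "fobj \<mu> P x = (\<Sum>k\<in>UNIV. \<mu> $ k * P $ k powr (1 / (1 + x $ k)))"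

definition zeta :: "real ^ 'k \<Rightarrow> real ^ 'k \<Rightarrow> real ^ 'k \<Rightarrow> real ^ 'k::finite \<Rightarrow> real" where
  "zeta \<mu> P x0 x = (\<Sum>k\<in>UNIV. \<mu> $ k *
     (P $ k powr (1 / (1 + x0 $ k))
      - P $ k powr (1 / (1 + x0 $ k)) * ln (P $ k) / (1 + x0 $ k)^2 * (x $ k - x0 $ k)
      - cbound / (2 * (ln (P $ k))^2) * (x $ k - x0 $ k)^2))"

end

theory Submission imports Defs begin

(* With L = ln P < 0 and s = -L / (1 + x) >= 0 one computes L^2 h''(x) = e^(-s) s^3 (s - 2).
   Its derivative e^(-s) s^2 (6 s - s^2 - 6) vanishes at s = 3 - sqrt 3, where it attains its
   minimum -cbound over s >= 0.  Taylor's theorem with Lagrange remainder then bounds every summand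
   of f from below by its second-order expansion with curvature -cbound / L^2, and zeta is the
   resulting sum of concave quadratics in the coordinates. *)

lemma cbound_eq: "cbound = exp (sqrt 3 - 3) * (3 - sqrt 3) ^ 3 * (sqrt 3 - 1)"
proof -
  have root: "3 - sqrt 3 = sqrt 3 * (sqrt 3 - 1)"
    by (simp add: algebra_simps)
  have "(sqrt 3 - 3) ^ 4 = (3 - sqrt 3) ^ 3 * (3 - sqrt (3::real))"
    by algebra
  also have "\<dots> = sqrt 3 * ((3 - sqrt 3) ^ 3 * (sqrt 3 - 1))"
    by (simp add: root mult_ac)
  finally have "(sqrt 3 - 3) ^ 4 / sqrt 3 = (3 - sqrt 3) ^ 3 * (sqrt 3 - 1)"
    by simp
  then have "cbound = exp (sqrt 3 - 3) * ((3 - sqrt 3) ^ 3 * (sqrt 3 - 1))"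
    unfolding cbound_def by (metis mult.commute times_divide_eq_right)
  then show ?thesis
    by (simp add: mult.assoc)
qed

lemma cbound_nonneg: "0 \<le> cbound"
  by (simp add: cbound_def)

lemma exp_cubic_has_derivative:
  "((\<lambda>s. exp (- s) * s ^ 3 * (s - 2)) has_real_derivative
     exp (- s) * s\<^sup>2 * ((3 - sqrt 3) - s) * (s - (3 + sqrt 3))) (at s)"
  by (auto intro!: derivative_eq_intros simp: algebra_simps power2_eq_square power3_eq_cube)

lemma exp_cubic_ge_neg_cbound:
  fixes s :: real
  assumes "0 \<le> s"
  shows "- cbound \<le> exp (- s) * s ^ 3 * (s - 2)"
proof -
  define g :: "real \<Rightarrow> real" where "g s = exp (- s) * s ^ 3 * (s - 2)" for s
  define s\<^sub>0 where "s\<^sub>0 = 3 - sqrt 3"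
  have sqrt3: "1 < sqrt 3" "sqrt 3 < 2"
    by (simp_all add: real_less_rsqrt real_less_lsqrt)
  have g_s0: "g s\<^sub>0 = - cbound"
    by (simp add: g_def s\<^sub>0_def cbound_eq algebra_simps)
  have g': "(g has_real_derivative exp (- t) * t\<^sup>2 * (s\<^sub>0 - t) * (t - (3 + sqrt 3))) (at t)" for t
    unfolding g_def s\<^sub>0_def by (rule exp_cubic_has_derivative)
  consider "s \<le> s\<^sub>0" | "s\<^sub>0 \<le> s" "s \<le> 2" | "2 \<le> s"
    by linarith
  then have "g s\<^sub>0 \<le> g s"
  proof cases
    case 1
    show ?thesis
    proof (rule DERIV_nonpos_imp_nonincreasing[OF 1])
      fix t assume "s \<le> t" "t \<le> s\<^sub>0"
      then have "0 \<le> s\<^sub>0 - t" "t - (3 + sqrt 3) \<le> 0"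
        using sqrt3 unfolding s\<^sub>0_def by linarith+
      then show "\<exists>y. (g has_real_derivative y) (at t) \<and> y \<le> 0"
        using g' by (intro exI conjI) (auto intro!: mult_nonneg_nonpos)
    qed
  next
    case 2
    show ?thesis
    proof (rule DERIV_nonneg_imp_nondecreasing[OF 2(1)])
      fix t assume "s\<^sub>0 \<le> t" "t \<le> s"
      then have "s\<^sub>0 - t \<le> 0" "t - (3 + sqrt 3) \<le> 0"
        using sqrt3 2 unfolding s\<^sub>0_def by linarith+
      then show "\<exists>y. (g has_real_derivative y) (at t) \<and> 0 \<le> y"
        using g' by (intro exI conjI) (auto simp: mult_nonneg_nonpos intro!: mult_nonpos_nonpos)
    qed
  next
    case 3
    then have "0 \<le> g s" by (simp add: g_def)
    then show ?thesis using g_s0 cbound_nonneg by linarith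
  qed
  then show ?thesis using g_s0 by (simp add: g_def)
qed

definition hdet_deriv :: "real \<Rightarrow> real \<Rightarrow> real" where
  "hdet_deriv P x = - ln P * hdet P x / (1 + x)\<^sup>2"

definition hdet_deriv2 :: "real \<Rightarrow> real \<Rightarrow> real" where
  "hdet_deriv2 P x = ln P * (ln P + 2 * (1 + x)) * hdet P x / (1 + x) ^ 4"

lemma hdet_eq_exp: "0 < P \<Longrightarrow> hdet P = (\<lambda>x. exp (ln P / (1 + x)))"
  by (simp add: hdet_def powr_def fun_eq_iff)

lemma has_real_derivative_hdet:
  "0 < P \<Longrightarrow> -1 < x \<Longrightarrow> (hdet P has_real_derivative hdet_deriv P x) (at x)"
  unfolding hdet_deriv_def
  by (auto simp: hdet_eq_exp power2_eq_square intro!: derivative_eq_intros)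

lemma has_real_derivative_hdet_deriv:
  assumes "0 < P" "-1 < x"
  shows "(hdet_deriv P has_real_derivative hdet_deriv2 P x) (at x)"
proof -
  have "1 + x \<noteq> 0" using assms(2) by simp
  then show ?thesis
    using assms(1) unfolding hdet_deriv_def[abs_def] hdet_deriv2_def
    by (auto simp: hdet_eq_exp intro!: derivative_eq_intros)
      (simp add: divide_simps power2_eq_square power4_eq_xxxx; algebra)
qed

lemma deriv_hdet: "0 < P \<Longrightarrow> -1 < x \<Longrightarrow> deriv (hdet P) x = hdet_deriv P x"
  by (rule DERIV_imp_deriv[OF has_real_derivative_hdet])

lemma has_real_derivative_deriv_hdet:
  assumes "0 < P" "-1 < x"
  shows "(deriv (hdet P) has_real_derivative hdet_deriv2 P x) (at x)"
  using has_field_derivative_transform_within_open[OF has_real_derivative_hdet_deriv[OF assms],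
      of "{-1<..}"] assms deriv_hdet
  by simp

lemma hdet_deriv_pos: "0 < P \<Longrightarrow> P < 1 \<Longrightarrow> -1 < x \<Longrightarrow> 0 < hdet_deriv P x"
  unfolding hdet_deriv_def hdet_def by (simp add: divide_neg_pos mult_neg_pos)

lemma strict_mono_on_hdet:
  assumes "0 < P" "P < 1"
  shows "strict_mono_on {-1<..} (hdet P)"
proof (rule strict_mono_onI)
  fix a b :: real assume "a \<in> {-1<..}" "a < b"
  show "hdet P a < hdet P b"
  proof (rule DERIV_pos_imp_increasing[OF \<open>a < b\<close>])
    fix t assume "a \<le> t"
    with \<open>a \<in> {-1<..}\<close> have "-1 < t" by simp
    then show "\<exists>y. (hdet P has_real_derivative y) (at t) \<and> 0 < y"
      using assms has_real_derivative_hdet hdet_deriv_pos by blast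
  qed
qed

lemma hdet_deriv2_ge:
  assumes "0 < P" "P < 1" "-1 < x"
  shows "- cbound / (ln P)\<^sup>2 \<le> hdet_deriv2 P x"
proof -
  define s where "s = - ln P / (1 + x)"
  have "0 \<le> s"
    using assms by (simp add: s_def divide_nonpos_pos)
  have "1 + x \<noteq> 0"
    using assms by simp
  then have "(ln P)\<^sup>2 * hdet_deriv2 P x = exp (- s) * s ^ 3 * (s - 2)"
    using assms unfolding s_def hdet_deriv2_def
    by (simp add: hdet_eq_exp divide_simps) algebra
  with exp_cubic_ge_neg_cbound[OF \<open>0 \<le> s\<close>] have "- cbound \<le> (ln P)\<^sup>2 * hdet_deriv2 P x"
    by simp
  moreover have "0 < (ln P)\<^sup>2"
    using assms by simp
  ultimately show ?thesis
    by (simp add: field_simps)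
qed

lemma Taylor_second_order_lower_bound:
  fixes f f' f'' :: "real \<Rightarrow> real"
  assumes f': "\<And>t. min x0 x \<le> t \<Longrightarrow> t \<le> max x0 x \<Longrightarrow> (f has_real_derivative f' t) (at t)"
    and f'': "\<And>t. min x0 x \<le> t \<Longrightarrow> t \<le> max x0 x \<Longrightarrow> (f' has_real_derivative f'' t) (at t)"
    and lower: "\<And>t. min x0 x \<le> t \<Longrightarrow> t \<le> max x0 x \<Longrightarrow> - c \<le> f'' t"
  shows "f x0 + f' x0 * (x - x0) - c / 2 * (x - x0)\<^sup>2 \<le> f x"
proof (cases "x = x0")
  case False
  define diff where "diff m = (if m = 0 then f else if m = 1 then f' else f'')" for m :: nat
  have "\<exists>t. (if x < x0 then x < t \<and> t < x0 else x0 < t \<and> t < x) \<and>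
      f x = (\<Sum>m<2. diff m x0 / fact m * (x - x0) ^ m) + diff 2 t / fact 2 * (x - x0) ^ 2"
    using False f' f'' by (intro Taylor) (auto simp: diff_def less_2_cases_iff)
  then obtain t where t_between: "if x < x0 then x < t \<and> t < x0 else x0 < t \<and> t < x"
    and taylor_sum: "f x = (\<Sum>m<2. diff m x0 / fact m * (x - x0) ^ m) + diff 2 t / fact 2 * (x - x0) ^ 2"
    by blast
  have t: "min x0 x \<le> t" "t \<le> max x0 x"
    using t_between by (auto split: if_splits)
  have taylor: "f x = f x0 + f' x0 * (x - x0) + f'' t / 2 * (x - x0)\<^sup>2"
    using taylor_sum by (simp add: diff_def numeral_2_eq_2)
  have "- c / 2 * (x - x0)\<^sup>2 \<le> f'' t / 2 * (x - x0)\<^sup>2"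
    using lower[OF t] by (intro mult_right_mono) auto
  then show ?thesis
    using taylor by simp
qed simp

lemma hdet_ge_quadratic_minorant:
  assumes "0 < P" "P < 1" "-1 < x0" "-1 < x"
  shows "hdet P x0 + hdet_deriv P x0 * (x - x0) - cbound / (2 * (ln P)\<^sup>2) * (x - x0)\<^sup>2 \<le> hdet P x"
proof -
  have "hdet P x0 + hdet_deriv P x0 * (x - x0) - (cbound / (ln P)\<^sup>2) / 2 * (x - x0)\<^sup>2 \<le> hdet P x"
  proof (rule Taylor_second_order_lower_bound)
    fix t assume "min x0 x \<le> t"
    then have "-1 < t" using assms by linarith
    then show "(hdet P has_real_derivative hdet_deriv P t) (at t)"
      and "(hdet_deriv P has_real_derivative hdet_deriv2 P t) (at t)"
      and "- (cbound / (ln P)\<^sup>2) \<le> hdet_deriv2 P t"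
      using assms has_real_derivative_hdet has_real_derivative_hdet_deriv hdet_deriv2_ge by auto
  qed
  then show ?thesis
    by (simp add: mult.commute)
qed

lemma concave_on_sum_fun:
  assumes "finite I" "convex S" "\<And>i. i \<in> I \<Longrightarrow> concave_on S (f i)"
  shows "concave_on S (\<lambda>x. \<Sum>i\<in>I. f i x)"
  using assms(1,3)
  by (induction I rule: finite_induct) (auto simp: concave_on_const assms(2) intro: concave_on_add)

lemma concave_on_vec_nth:
  assumes "concave_on UNIV g" "convex S"
  shows "concave_on S (\<lambda>x :: real ^ 'n. g (x $ k))"
  using assms unfolding concave_on_iff by simp

lemma concave_on_concave_quadratic:
  fixes A B C w :: real
  assumes "0 \<le> C"
  shows "concave_on UNIV (\<lambda>z. A + B * (z - w) - C * (z - w)\<^sup>2)"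
  unfolding concave_on_iff
proof (intro conjI ballI allI impI convex_UNIV)
  fix a b u v :: real
  assume uv: "0 \<le> u" "0 \<le> v" "u + v = 1"
  have v: "v = 1 - u"
    using uv(3) by simp
  have "(A + B * (u *\<^sub>R a + v *\<^sub>R b - w) - C * (u *\<^sub>R a + v *\<^sub>R b - w)\<^sup>2)
      - (u * (A + B * (a - w) - C * (a - w)\<^sup>2) + v * (A + B * (b - w) - C * (b - w)\<^sup>2))
      = C * (u * v * (a - b)\<^sup>2)"
    unfolding real_scaleR_def v by (simp add: algebra_simps power2_eq_square)
  moreover have "0 \<le> C * (u * v * (a - b)\<^sup>2)"
    using assms uv by simp
  ultimately show "u * (A + B * (a - w) - C * (a - w)\<^sup>2) + v * (A + B * (b - w) - C * (b - w)\<^sup>2)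
      \<le> A + B * (u *\<^sub>R a + v *\<^sub>R b - w) - C * (u *\<^sub>R a + v *\<^sub>R b - w)\<^sup>2"
    by linarith
qed

lemma convex_nonneg_orthant: "convex nonneg_orthant"
  unfolding convex_def nonneg_orthant_def by simp

lemma fobj_eq: "fobj \<mu> P x = (\<Sum>k\<in>UNIV. \<mu> $ k * hdet (P $ k) (x $ k))"
  by (simp add: fobj_def hdet_def)

lemma zeta_eq:
  "zeta \<mu> P x0 x = (\<Sum>k\<in>UNIV. \<mu> $ k * (hdet (P $ k) (x0 $ k)
      + hdet_deriv (P $ k) (x0 $ k) * (x $ k - x0 $ k)
      - cbound / (2 * (ln (P $ k))\<^sup>2) * (x $ k - x0 $ k)\<^sup>2))"
  by (simp add: zeta_def hdet_def hdet_deriv_def mult_ac)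

theorem mainTheorem7:
  fixes \<mu> P :: "real ^ 'k::finite"
  assumes mu_pos: "\<And>k. 0 < \<mu> $ k"
      and P_pos: "\<And>k. 0 < P $ k" and P_lt1: "\<And>k. P $ k < 1"
  shows "(\<forall>p::real. 0 < p \<and> p < 1 \<longrightarrow>
            strict_mono_on {0..} (hdet p) \<and>
            (\<forall>x\<ge>0. (hdet p has_real_derivative deriv (hdet p) x) (at x) \<and>
                    (deriv (hdet p) has_real_derivative deriv (deriv (hdet p)) x) (at x) \<and>
                    deriv (deriv (hdet p)) x \<ge> - cbound / (ln p)^2))
       \<and> (\<forall>x0 \<in> nonneg_orthant.
            (\<forall>x \<in> nonneg_orthant. fobj \<mu> P x \<ge> zeta \<mu> P x0 x)
            \<and> fobj \<mu> P x0 = zeta \<mu> P x0 x0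
            \<and> concave_on nonneg_orthant (zeta \<mu> P x0))"
proof (intro conjI allI impI ballI)
  fix p :: real
  assume "0 < p \<and> p < 1"
  then have p: "0 < p" "p < 1" by auto
  show "strict_mono_on {0..} (hdet p)"
    using strict_mono_on_hdet[OF p] by (rule monotone_on_subset) auto
  fix x :: real
  assume "0 \<le> x"
  then have x: "-1 < x" by simp
  have dd: "deriv (deriv (hdet p)) x = hdet_deriv2 p x"
    using has_real_derivative_deriv_hdet[OF p(1) x] by (rule DERIV_imp_deriv)
  show "(hdet p has_real_derivative deriv (hdet p) x) (at x)"
    using has_real_derivative_hdet[OF p(1) x] deriv_hdet[OF p(1) x] by simp
  show "(deriv (hdet p) has_real_derivative deriv (deriv (hdet p)) x) (at x)"
    using has_real_derivative_deriv_hdet[OF p(1) x] dd by simp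
  show "- cbound / (ln p)\<^sup>2 \<le> deriv (deriv (hdet p)) x"
    using hdet_deriv2_ge[OF p x] dd by simp
next
  fix x0 x :: "real ^ 'k"
  assume "x0 \<in> nonneg_orthant" "x \<in> nonneg_orthant"
  then show "zeta \<mu> P x0 x \<le> fobj \<mu> P x"
    unfolding zeta_eq fobj_eq using mu_pos P_pos P_lt1
    by (intro sum_mono mult_left_mono hdet_ge_quadratic_minorant)
      (auto simp: nonneg_orthant_def less_imp_le intro: order.strict_trans2[of "-1" 0])
next
  fix x0 :: "real ^ 'k"
  show "fobj \<mu> P x0 = zeta \<mu> P x0 x0"
    by (simp add: fobj_def zeta_def)
  have "0 \<le> cbound / (2 * (ln (P $ k))\<^sup>2)" for k
    using cbound_nonneg by simp
  then show "concave_on nonneg_orthant (zeta \<mu> P x0)"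
    unfolding zeta_eq[abs_def] using mu_pos
    by (intro concave_on_sum_fun concave_on_cmul concave_on_vec_nth concave_on_concave_quadratic
        convex_nonneg_orthant) (auto simp: less_imp_le)
qed

end
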